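(* The function \[ F_0(k,a,b,c) = (-1)^k\,\frac{\Gamma(2a+k)\Gamma(2b+k)}{\Gamma(2a+2c+k)\Gamma(2b+2c+k)}\cdot\frac{\Gamma(2c)\,\Gamma(a-b+c+\tfrac12)}{\Gamma(a-b-c+\tfrac12)} \] is a WZ seed in the variables $a,b,c$.
   Context: A term $F(n_1,\dots,n_r)$ is hypergeometric in $n_1,\dots,n_r$ if each ratio $F(\dots,n_i+1,\dots)/F(\dots,n_i,\dots)$ is a rational function of $n_1,\dots,n_r$. Write $\Delta_n f(n)=f(n+1)-f(n)$. Two hypergeometric terms $F(n,k),G(n,k)$ form a WZ pair, and $G$ is called a WZ mate of $F$, if $\Delta_n F(n,k)=\Delta_k G(n,k)$. A hypergeometric term $F_0(k,a,b,\dots)$ (hypergeometric in $k,a,b,\dots$) is a WZ seed in the variables $a,b,\dots$ if for all integers $K,A,B,\dots$ and all complex $k_0$ and all values of the parameters $a,b,\dots$, the term $F(n,k)=F_0(Kn+k_0+k,\,An+a,\,Bn+b,\dots)$ has a WZ mate $G(n,k)$ (a hypergeometric term). Factors such as $(-1)^x$ or $z^x$ with non-integer exponent $x$ are understood as hypergeometric factors satisfying $(-1)^{x+1}=-(-1)^x$, $z^{x+1}=z\cdot z^x$ (e.g. defined via a fixed branch of the exponential). *)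

theory Defs
  imports "HOL-Analysis.Analysis" "HOL-Computational_Algebra.Polynomial"
begin

text \<open>Bivariate polynomials with complex coefficients, represented as polynomials
  (in the second variable) whose coefficients are polynomials (in the first variable).\<close>
definition poly2 :: "complex poly poly \<Rightarrow> complex \<Rightarrow> complex \<Rightarrow> complex" where
  "poly2 P x y = poly (map_poly (\<lambda>c. poly c x) P) y"

text \<open>The hypergeometric factor (-1)^x for complex x, via the fixed branch exp(i pi x);
  it satisfies (-1)^(x+1) = -(-1)^x.\<close>
definition neg1_pow :: "complex \<Rightarrow> complex" where
  "neg1_pow x = exp (complex_of_real pi * \<i> * x)"

definition hypergeometric2 :: "(int \<Rightarrow> int \<Rightarrow> complex) \<Rightarrow> bool" where
  "hypergeometric2 G \<longleftrightarrow>
     (\<exists>P1 Q1 P2 Q2 :: complex poly poly. Q1 \<noteq> 0 \<and> Q2 \<noteq> 0 \<and>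
        (\<forall>n k. poly2 Q1 (of_int n) (of_int k) * G (n + 1) k
               = poly2 P1 (of_int n) (of_int k) * G n k) \<and>
        (\<forall>n k. poly2 Q2 (of_int n) (of_int k) * G n (k + 1)
               = poly2 P2 (of_int n) (of_int k) * G n k))"

definition WZ_mate :: "(int \<Rightarrow> int \<Rightarrow> complex) \<Rightarrow> (int \<Rightarrow> int \<Rightarrow> complex) \<Rightarrow> bool" where
  "WZ_mate F G \<longleftrightarrow> hypergeometric2 G \<and> (\<forall>n k. F (n + 1) k - F n k = G n (k + 1) - G n k)"

definition F0 :: "complex \<Rightarrow> complex \<Rightarrow> complex \<Rightarrow> complex \<Rightarrow> complex" where
  "F0 k a b c = neg1_pow k *
     (Gamma (2*a + k) * Gamma (2*b + k) / (Gamma (2*a + 2*c + k) * Gamma (2*b + 2*c + k))) *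
     (Gamma (2*c) * Gamma (a - b + c + 1/2) / Gamma (a - b - c + 1/2))"

definition F_spec :: "int \<Rightarrow> int \<Rightarrow> int \<Rightarrow> int \<Rightarrow> complex \<Rightarrow> complex \<Rightarrow> complex \<Rightarrow> complex
    \<Rightarrow> int \<Rightarrow> int \<Rightarrow> complex" where
  "F_spec K A B C k0 a b c n k =
     F0 (of_int (K*n) + k0 + of_int k) (of_int (A*n) + a) (of_int (B*n) + b) (of_int (C*n) + c)"

definition F_regular :: "int \<Rightarrow> int \<Rightarrow> int \<Rightarrow> int \<Rightarrow> complex \<Rightarrow> complex \<Rightarrow> complex \<Rightarrow> complex \<Rightarrow> bool" where
  "F_regular K A B C k0 a b c \<longleftrightarrow>
     (\<forall>n k :: int.
        let x = of_int (K*n) + k0 + of_int k; a' = of_int (A*n) + a;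
            b' = of_int (B*n) + b; c' = of_int (C*n) + c
        in 2*a' + x \<notin> \<int>\<^sub>\<le>\<^sub>0 \<and> 2*b' + x \<notin> \<int>\<^sub>\<le>\<^sub>0 \<and>
           2*a' + 2*c' + x \<notin> \<int>\<^sub>\<le>\<^sub>0 \<and> 2*b' + 2*c' + x \<notin> \<int>\<^sub>\<le>\<^sub>0 \<and>
           2*c' \<notin> \<int>\<^sub>\<le>\<^sub>0 \<and> a' - b' + c' + 1/2 \<notin> \<int>\<^sub>\<le>\<^sub>0 \<and> a' - b' - c' + 1/2 \<notin> \<int>\<^sub>\<le>\<^sub>0)"

end

theory Submission
  imports Defs
begin

text \<open>
  The seed satisfies three contiguous relations: the unit steps \<open>a \<mapsto> a + 1\<close>,
  \<open>b \<mapsto> b + 1\<close> and \<open>c \<mapsto> c + 1\<close> of \<open>F0\<close> are forward differences in \<open>x\<close> of explicit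
  Gamma quotients \<open>mate_a\<close>, \<open>mate_b\<close>, \<open>mate_c\<close>.  Along the line
  \<open>F(n, k) = F0(Kn + k0 + k, An + a, Bn + b, Cn + c)\<close> the step \<open>n \<mapsto> n + 1\<close> moves
  \<open>(x, a, b, c)\<close> by the integer vector \<open>(K, A, B, C)\<close>.  Walk from \<open>(a, b, c)\<close> to
  \<open>(a + A, b + B, c + C)\<close> by \<open>A\<close> diagonal steps in \<open>(a, b)\<close>, then \<open>C\<close> diagonal steps in
  \<open>(b, c)\<close>, then \<open>B - A - C\<close> steps in \<open>b\<close>, and finally shift \<open>x\<close> by \<open>K\<close>; the sum \<open>G\<close>
  of the mates of all single steps satisfies \<open>\<Delta>\<^sub>n F = \<Delta>\<^sub>k G\<close>.  Apart from unit
  increases, the numerator arguments \<open>2c\<close> and \<open>a - b + c + 1/2\<close> are moved only on legs that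
  exist when \<open>C \<noteq> 0\<close>, resp. \<open>A - B + C \<noteq> 0\<close>; regularity on the whole line then makes them
  non-integral, so no pole is ever met.  Every summand of \<open>G\<close> is \<open>F\<close> times a Gamma
  quotient with integer-shifted arguments, i.e. a rational multiple of \<open>F\<close>; so are the shifts
  of \<open>G\<close>, which makes \<open>G\<close> hypergeometric.
\<close>

section \<open>Contiguous relations of the seed\<close>

lemma neg1_pow_plus1: "neg1_pow (x + 1) = - neg1_pow x"
  unfolding neg1_pow_def by (simp add: distrib_left exp_add exp_pi_i)

lemma neg1_pow_add: "neg1_pow (x + y) = exp (complex_of_real pi * \<i> * y) * neg1_pow x"
  unfolding neg1_pow_def by (simp add: distrib_left exp_add)

lemma Gamma_shift1:
  fixes z :: complex
  assumes "z \<notin> \<int>\<^sub>\<le>\<^sub>0" "w = z + 1"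
  shows "Gamma w = z * Gamma z"
  using Gamma_plus1[OF assms(1)] assms(2) by simp

lemma Gamma_shift2:
  fixes z :: complex
  assumes "z \<notin> \<int>\<^sub>\<le>\<^sub>0" "w = z + 2"
  shows "Gamma w = z * (z + 1) * Gamma z"
proof -
  have "z + 1 \<notin> \<int>\<^sub>\<le>\<^sub>0"
    using assms(1) plus_one_in_nonpos_Ints_imp by blast
  then show ?thesis
    using Gamma_plus1[of "z + 1"] Gamma_plus1[OF assms(1)] assms(2) by (simp add: add.assoc)
qed

lemma rGamma_shift1: "w = z + 1 \<Longrightarrow> rGamma z = z * rGamma w"
  using rGamma_plus1[of z] by simp

lemma rGamma_shift2: "w = z + 2 \<Longrightarrow> rGamma z = z * (z + 1) * rGamma (w :: complex)"
  using rGamma_plus1[of z] rGamma_plus1[of "z + 1"] by (simp add: add.assoc mult.assoc)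

text \<open>Denominators are written with the entire function \<open>rGamma = 1 / Gamma\<close>, so identities
  between these terms hold without side conditions at poles.\<close>

definition seed_term ::
    "int \<Rightarrow> int \<Rightarrow> int \<Rightarrow> int \<Rightarrow> complex \<Rightarrow> complex \<Rightarrow> complex \<Rightarrow> complex \<Rightarrow> complex"
  where "seed_term p q r s x a b c =
    neg1_pow x * Gamma (2*a + x) * Gamma (2*b + x)
    * rGamma (2*a + 2*c + x + of_int p) * rGamma (2*b + 2*c + x + of_int q)
    * Gamma (2*c) * Gamma (a - b + c + 1/2 + of_int r) * rGamma (a - b - c + 1/2 + of_int s)"

lemma F0_eq_seed_term: "F0 = seed_term 0 0 0 0"
proof (intro ext)
  show "F0 x a b c = seed_term 0 0 0 0 x a b c" for x a b c
    unfolding F0_def seed_term_def rGamma_inverse_Gamma divide_inverse inverse_mult_distrib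
      of_int_0 add_0_right
    by (simp only: mult_ac)
qed

definition mate_a :: "complex \<Rightarrow> complex \<Rightarrow> complex \<Rightarrow> complex \<Rightarrow> complex"
  where "mate_a x a b c = seed_term 1 0 0 1 x a b c * (c * (1 - 2*b - 2*c - x))"

definition mate_b :: "complex \<Rightarrow> complex \<Rightarrow> complex \<Rightarrow> complex \<Rightarrow> complex"
  where "mate_b x a b c = seed_term 0 1 (-1) 0 x a b c * (c * (2*a + 2*c + x - 1))"

definition mate_c :: "complex \<Rightarrow> complex \<Rightarrow> complex \<Rightarrow> complex \<Rightarrow> complex"
  where "mate_c x a b c =
    seed_term 1 1 0 0 x a b c * (((x + 2*a + 3*c) * (x + 2*b + 3*c) + c * (c + 1)) / 2)"

lemmas seed_term_unfold =
  F0_eq_seed_term seed_term_def of_int_0 of_int_1 of_int_minus add_0_right add_uminus_conv_diff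

lemma F0_contiguous_a:
  assumes "2*a + x \<notin> \<int>\<^sub>\<le>\<^sub>0" "2*b + x \<notin> \<int>\<^sub>\<le>\<^sub>0" "a - b + c + 1/2 \<notin> \<int>\<^sub>\<le>\<^sub>0"
  shows "F0 x (a + 1) b c - F0 x a b c = mate_a (x + 1) a b c - mate_a x a b c"
proof -
  have Gamma_shifts:
      "Gamma (2*(a + 1) + x) = (2*a + x) * (2*a + x + 1) * Gamma (2*a + x)"
      "Gamma (2*a + (x + 1)) = (2*a + x) * Gamma (2*a + x)"
      "Gamma (2*b + (x + 1)) = (2*b + x) * Gamma (2*b + x)"
      "Gamma (a + 1 - b + c + 1/2) = (a - b + c + 1/2) * Gamma (a - b + c + 1/2)"
    by (rule Gamma_shift2 Gamma_shift1; use assms in \<open>simp add: algebra_simps\<close>)+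
  have rGamma_shifts:
      "rGamma (2*a + 2*c + x)
        = (2*a + 2*c + x) * (2*a + 2*c + x + 1) * rGamma (2*(a + 1) + 2*c + x)"
      "rGamma (2*a + 2*c + x + 1) = (2*a + 2*c + x + 1) * rGamma (2*(a + 1) + 2*c + x)"
      "rGamma (2*a + 2*c + (x + 1) + 1) = rGamma (2*(a + 1) + 2*c + x)"
      "rGamma (2*b + 2*c + x) = (2*b + 2*c + x) * rGamma (2*b + 2*c + (x + 1))"
      "rGamma (a - b - c + 1/2) = (a - b - c + 1/2) * rGamma (a - b - c + 1/2 + 1)"
      "rGamma (a + 1 - b - c + 1/2) = rGamma (a - b - c + 1/2 + 1)"
    by (rule rGamma_shift2 rGamma_shift1 arg_cong[where f = rGamma]; simp add: algebra_simps)+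
  define common where "common = neg1_pow x * Gamma (2*a + x) * Gamma (2*b + x)
    * rGamma (2*(a + 1) + 2*c + x) * rGamma (2*b + 2*c + (x + 1))
    * Gamma (2*c) * Gamma (a - b + c + 1/2) * rGamma (a - b - c + 1/2 + 1)"
  have factored:
    "F0 x (a + 1) b c
      = common * ((2*a + x) * (2*a + x + 1) * (2*b + 2*c + x) * (a - b + c + 1/2))"
    "F0 x a b c
      = common * ((2*a + 2*c + x) * (2*a + 2*c + x + 1) * (2*b + 2*c + x) * (a - b - c + 1/2))"
    "mate_a (x + 1) a b c
      = common * - ((2*a + x) * (2*b + x) * (c * (1 - 2*b - 2*c - (x + 1))))"
    "mate_a x a b c
      = common * ((2*a + 2*c + x + 1) * (2*b + 2*c + x) * (c * (1 - 2*b - 2*c - x)))"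
    unfolding common_def seed_term_unfold mate_a_def neg1_pow_plus1 Gamma_shifts rGamma_shifts
    by (simp_all add: mult_ac)
  show ?thesis
    unfolding factored by (simp add: algebra_simps)
qed

lemma F0_contiguous_b:
  assumes "2*a + x \<notin> \<int>\<^sub>\<le>\<^sub>0" "2*b + x \<notin> \<int>\<^sub>\<le>\<^sub>0" "a - b + c - 1/2 \<notin> \<int>\<^sub>\<le>\<^sub>0"
  shows "F0 x a (b + 1) c - F0 x a b c = mate_b (x + 1) a b c - mate_b x a b c"
proof -
  have Gamma_shifts:
      "Gamma (2*(b + 1) + x) = (2*b + x) * (2*b + x + 1) * Gamma (2*b + x)"
      "Gamma (2*a + (x + 1)) = (2*a + x) * Gamma (2*a + x)"
      "Gamma (2*b + (x + 1)) = (2*b + x) * Gamma (2*b + x)"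
      "Gamma (a - b + c + 1/2) = (a - b + c + 1/2 - 1) * Gamma (a - b + c + 1/2 - 1)"
      "Gamma (a - (b + 1) + c + 1/2) = Gamma (a - b + c + 1/2 - 1)"
    by (rule Gamma_shift2 Gamma_shift1 arg_cong[where f = Gamma];
        use assms in \<open>simp add: algebra_simps\<close>)+
  have rGamma_shifts:
      "rGamma (2*a + 2*c + x) = (2*a + 2*c + x) * rGamma (2*a + 2*c + (x + 1))"
      "rGamma (2*b + 2*c + x)
        = (2*b + 2*c + x) * (2*b + 2*c + x + 1) * rGamma (2*(b + 1) + 2*c + x)"
      "rGamma (2*b + 2*c + x + 1) = (2*b + 2*c + x + 1) * rGamma (2*(b + 1) + 2*c + x)"
      "rGamma (2*b + 2*c + (x + 1) + 1) = rGamma (2*(b + 1) + 2*c + x)"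
      "rGamma (a - (b + 1) - c + 1/2) = (a - (b + 1) - c + 1/2) * rGamma (a - b - c + 1/2)"
    by (rule rGamma_shift2 rGamma_shift1 arg_cong[where f = rGamma]; simp add: algebra_simps)+
  define common where "common = neg1_pow x * Gamma (2*a + x) * Gamma (2*b + x)
    * rGamma (2*a + 2*c + (x + 1)) * rGamma (2*(b + 1) + 2*c + x)
    * Gamma (2*c) * Gamma (a - b + c + 1/2 - 1) * rGamma (a - b - c + 1/2)"
  have factored:
    "F0 x a (b + 1) c
      = common * ((2*b + x) * (2*b + x + 1) * (2*a + 2*c + x) * (a - (b + 1) - c + 1/2))"
    "F0 x a b c
      = common * ((2*a + 2*c + x) * (2*b + 2*c + x) * (2*b + 2*c + x + 1) * (a - b + c + 1/2 - 1))"
    "mate_b (x + 1) a b c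
      = common * - ((2*a + x) * (2*b + x) * (c * (2*a + 2*c + (x + 1) - 1)))"
    "mate_b x a b c
      = common * ((2*a + 2*c + x) * (2*b + 2*c + x + 1) * (c * (2*a + 2*c + x - 1)))"
    unfolding common_def seed_term_unfold mate_b_def neg1_pow_plus1 Gamma_shifts rGamma_shifts
    by (simp_all add: mult_ac)
  show ?thesis
    unfolding factored by (simp add: algebra_simps)
qed

lemma F0_contiguous_c:
  assumes "2*a + x \<notin> \<int>\<^sub>\<le>\<^sub>0" "2*b + x \<notin> \<int>\<^sub>\<le>\<^sub>0" "2*c \<notin> \<int>\<^sub>\<le>\<^sub>0" "a - b + c + 1/2 \<notin> \<int>\<^sub>\<le>\<^sub>0"
  shows "F0 x a b (c + 1) - F0 x a b c = mate_c (x + 1) a b c - mate_c x a b c"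
proof -
  have Gamma_shifts:
      "Gamma (2*(c + 1)) = 2*c * (2*c + 1) * Gamma (2*c)"
      "Gamma (2*a + (x + 1)) = (2*a + x) * Gamma (2*a + x)"
      "Gamma (2*b + (x + 1)) = (2*b + x) * Gamma (2*b + x)"
      "Gamma (a - b + (c + 1) + 1/2) = (a - b + c + 1/2) * Gamma (a - b + c + 1/2)"
    by (rule Gamma_shift2 Gamma_shift1; use assms in \<open>simp add: algebra_simps\<close>)+
  have rGamma_shifts:
      "rGamma (2*a + 2*c + x)
        = (2*a + 2*c + x) * (2*a + 2*c + x + 1) * rGamma (2*a + 2*(c + 1) + x)"
      "rGamma (2*a + 2*c + x + 1) = (2*a + 2*c + x + 1) * rGamma (2*a + 2*(c + 1) + x)"
      "rGamma (2*a + 2*c + (x + 1) + 1) = rGamma (2*a + 2*(c + 1) + x)"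
      "rGamma (2*b + 2*c + x)
        = (2*b + 2*c + x) * (2*b + 2*c + x + 1) * rGamma (2*b + 2*(c + 1) + x)"
      "rGamma (2*b + 2*c + x + 1) = (2*b + 2*c + x + 1) * rGamma (2*b + 2*(c + 1) + x)"
      "rGamma (2*b + 2*c + (x + 1) + 1) = rGamma (2*b + 2*(c + 1) + x)"
      "rGamma (a - b - (c + 1) + 1/2) = (a - b - (c + 1) + 1/2) * rGamma (a - b - c + 1/2)"
    by (rule rGamma_shift2 rGamma_shift1 arg_cong[where f = rGamma]; simp add: algebra_simps)+
  define common where "common = neg1_pow x * Gamma (2*a + x) * Gamma (2*b + x)
    * rGamma (2*a + 2*(c + 1) + x) * rGamma (2*b + 2*(c + 1) + x)
    * Gamma (2*c) * Gamma (a - b + c + 1/2) * rGamma (a - b - c + 1/2)"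
  have factored:
    "F0 x a b (c + 1)
      = common * (2*c * (2*c + 1) * (a - b + c + 1/2) * (a - b - (c + 1) + 1/2))"
    "F0 x a b c
      = common * ((2*a + 2*c + x) * (2*a + 2*c + x + 1) * (2*b + 2*c + x) * (2*b + 2*c + x + 1))"
    "mate_c (x + 1) a b c
      = common * - ((2*a + x) * (2*b + x)
          * (((x + 1 + 2*a + 3*c) * (x + 1 + 2*b + 3*c) + c * (c + 1)) / 2))"
    "mate_c x a b c
      = common * ((2*a + 2*c + x + 1) * (2*b + 2*c + x + 1)
          * (((x + 2*a + 3*c) * (x + 2*b + 3*c) + c * (c + 1)) / 2))"
    unfolding common_def seed_term_unfold mate_c_def neg1_pow_plus1 Gamma_shifts rGamma_shifts
    by (simp_all add: mult_ac)
  show ?thesis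
    unfolding factored by (simp add: field_simps)
qed

section \<open>Rational multiples on the lattice\<close>

inductive poly2_fun :: "(int \<Rightarrow> int \<Rightarrow> complex) \<Rightarrow> bool" where
  poly2_fun_const: "poly2_fun (\<lambda>n k. c)"
| poly2_fun_n: "poly2_fun (\<lambda>n k. of_int n)"
| poly2_fun_k: "poly2_fun (\<lambda>n k. of_int k)"
| poly2_fun_add: "poly2_fun f \<Longrightarrow> poly2_fun g \<Longrightarrow> poly2_fun (\<lambda>n k. f n k + g n k)"
| poly2_fun_mult: "poly2_fun f \<Longrightarrow> poly2_fun g \<Longrightarrow> poly2_fun (\<lambda>n k. f n k * g n k)"

lemma poly2_fun_diff:
  assumes "poly2_fun f" "poly2_fun g"
  shows "poly2_fun (\<lambda>n k. f n k - g n k)"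
proof -
  have "poly2_fun (\<lambda>n k. f n k + (-1) * g n k)"
    using assms by (intro poly2_fun_add poly2_fun_mult poly2_fun_const)
  then show ?thesis by simp
qed

lemma poly2_fun_divide: "poly2_fun f \<Longrightarrow> poly2_fun (\<lambda>n k. f n k / c)"
  using poly2_fun_mult[of f "\<lambda>n k. 1 / c"] poly2_fun_const by simp

lemma poly2_fun_pochhammer: "poly2_fun f \<Longrightarrow> poly2_fun (\<lambda>n k. pochhammer (f n k) N)"
proof (induction N)
  case 0
  show ?case using poly2_fun_const by simp
next
  case (Suc N)
  then have "poly2_fun (\<lambda>n k. pochhammer (f n k) N * (f n k + of_nat N))"
    by (intro poly2_fun_mult poly2_fun_add poly2_fun_const)
  then show ?case by (simp add: pochhammer_Suc)
qed

lemma poly2_fun_shift: "poly2_fun f \<Longrightarrow> poly2_fun (\<lambda>n k. f (n + i) (k + j))"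
proof (induction rule: poly2_fun.induct)
  case poly2_fun_n
  show ?case using poly2_fun_add[OF poly2_fun.poly2_fun_n poly2_fun_const[of "of_int i"]] by simp
next
  case poly2_fun_k
  show ?case using poly2_fun_add[OF poly2_fun.poly2_fun_k poly2_fun_const[of "of_int j"]] by simp
qed (auto intro: poly2_fun.intros)

lemma poly2_eq_poly_poly: "poly2 P x y = poly (poly P [:y:]) x"
  by (induction P) (simp_all add: poly2_def map_poly_pCons)

lemma poly2_fun_imp_poly2:
  "poly2_fun f \<Longrightarrow> \<exists>P. \<forall>n k. f n k = poly2 P (of_int n) (of_int k)"
proof (induction rule: poly2_fun.induct)
  case (poly2_fun_const c)
  show ?case by (rule exI[of _ "[:[:c:]:]"]) (simp add: poly2_eq_poly_poly)
next
  case poly2_fun_n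
  show ?case by (rule exI[of _ "[:[:0, 1:]:]"]) (simp add: poly2_eq_poly_poly)
next
  case poly2_fun_k
  show ?case by (rule exI[of _ "[:0, 1:]"]) (simp add: poly2_eq_poly_poly)
next
  case (poly2_fun_add f g)
  then obtain P Q where "\<forall>n k. f n k = poly2 P (of_int n) (of_int k)"
    "\<forall>n k. g n k = poly2 Q (of_int n) (of_int k)" by blast
  then show ?case by (intro exI[of _ "P + Q"]) (simp add: poly2_eq_poly_poly)
next
  case (poly2_fun_mult f g)
  then obtain P Q where "\<forall>n k. f n k = poly2 P (of_int n) (of_int k)"
    "\<forall>n k. g n k = poly2 Q (of_int n) (of_int k)" by blast
  then show ?case by (intro exI[of _ "P * Q"]) (simp add: poly2_eq_poly_poly)
qed

definition rat_multiple :: "(int \<Rightarrow> int \<Rightarrow> complex) \<Rightarrow> (int \<Rightarrow> int \<Rightarrow> complex) \<Rightarrow> bool" where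
  "rat_multiple T S \<longleftrightarrow> (\<exists>u v. poly2_fun u \<and> poly2_fun v \<and> (\<forall>n k. u n k \<noteq> 0) \<and>
     (\<forall>n k. u n k * T n k = v n k * S n k))"

lemma rat_multipleI:
  assumes "poly2_fun u" "poly2_fun v" "\<And>n k. u n k \<noteq> 0" "\<And>n k. u n k * T n k = v n k * S n k"
  shows "rat_multiple T S"
  using assms unfolding rat_multiple_def by blast

lemma rat_multipleE:
  assumes "rat_multiple T S"
  obtains u v where "poly2_fun u" "poly2_fun v" "\<forall>n k. u n k \<noteq> 0"
    "\<forall>n k. u n k * T n k = v n k * S n k"
  using assms unfolding rat_multiple_def by blast

lemma rat_multiple_trans:
  assumes "rat_multiple T S" "rat_multiple S R"
  shows "rat_multiple T R"
proof -
  obtain u v where uv: "poly2_fun u" "poly2_fun v" "\<forall>n k. u n k \<noteq> 0"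
    "\<forall>n k. u n k * T n k = v n k * S n k"
    using assms(1) by (rule rat_multipleE)
  obtain u' v' where uv': "poly2_fun u'" "poly2_fun v'" "\<forall>n k. u' n k \<noteq> 0"
    "\<forall>n k. u' n k * S n k = v' n k * R n k"
    using assms(2) by (rule rat_multipleE)
  show ?thesis
  proof (rule rat_multipleI[of "\<lambda>n k. u' n k * u n k" "\<lambda>n k. v n k * v' n k"])
    fix n k
    have "u' n k * u n k * T n k = v n k * (u' n k * S n k)"
      using uv(4) by (metis mult.assoc mult.left_commute)
    then show "u' n k * u n k * T n k = v n k * v' n k * R n k"
      using uv'(4) by (simp add: mult.assoc)
  qed (use uv uv' in \<open>auto intro: poly2_fun_mult\<close>)
qed

lemma rat_multiple_mult:
  assumes "rat_multiple T1 S1" "rat_multiple T2 S2"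
  shows "rat_multiple (\<lambda>n k. T1 n k * T2 n k) (\<lambda>n k. S1 n k * S2 n k)"
proof -
  obtain u v where uv: "poly2_fun u" "poly2_fun v" "\<forall>n k. u n k \<noteq> 0"
    "\<forall>n k. u n k * T1 n k = v n k * S1 n k"
    using assms(1) by (rule rat_multipleE)
  obtain u' v' where uv': "poly2_fun u'" "poly2_fun v'" "\<forall>n k. u' n k \<noteq> 0"
    "\<forall>n k. u' n k * T2 n k = v' n k * S2 n k"
    using assms(2) by (rule rat_multipleE)
  show ?thesis
  proof (rule rat_multipleI[of "\<lambda>n k. u n k * u' n k" "\<lambda>n k. v n k * v' n k"])
    fix n k
    have "u n k * u' n k * (T1 n k * T2 n k) = (u n k * T1 n k) * (u' n k * T2 n k)"
      by (simp add: mult_ac)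
    also have "\<dots> = (v n k * S1 n k) * (v' n k * S2 n k)"
      using uv(4) uv'(4) by simp
    finally show "u n k * u' n k * (T1 n k * T2 n k) = v n k * v' n k * (S1 n k * S2 n k)"
      by (simp add: mult_ac)
  qed (use uv uv' in \<open>auto intro: poly2_fun_mult\<close>)
qed

lemma rat_multiple_add:
  assumes "rat_multiple T1 S" "rat_multiple T2 S"
  shows "rat_multiple (\<lambda>n k. T1 n k + T2 n k) S"
proof -
  obtain u v where uv: "poly2_fun u" "poly2_fun v" "\<forall>n k. u n k \<noteq> 0"
    "\<forall>n k. u n k * T1 n k = v n k * S n k"
    using assms(1) by (rule rat_multipleE)
  obtain u' v' where uv': "poly2_fun u'" "poly2_fun v'" "\<forall>n k. u' n k \<noteq> 0"
    "\<forall>n k. u' n k * T2 n k = v' n k * S n k"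
    using assms(2) by (rule rat_multipleE)
  show ?thesis
  proof (rule rat_multipleI[of "\<lambda>n k. u n k * u' n k" "\<lambda>n k. v n k * u' n k + v' n k * u n k"])
    fix n k
    have "u n k * u' n k * (T1 n k + T2 n k)
        = u' n k * (u n k * T1 n k) + u n k * (u' n k * T2 n k)"
      by (simp add: algebra_simps)
    also have "\<dots> = u' n k * (v n k * S n k) + u n k * (v' n k * S n k)"
      using uv(4) uv'(4) by simp
    finally show "u n k * u' n k * (T1 n k + T2 n k) = (v n k * u' n k + v' n k * u n k) * S n k"
      by (simp add: algebra_simps)
  qed (use uv uv' in \<open>auto intro: poly2_fun_mult poly2_fun_add\<close>)
qed

lemma rat_multiple_times_poly:
  assumes "rat_multiple T S" "poly2_fun p"
  shows "rat_multiple (\<lambda>n k. T n k * p n k) S"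
proof -
  have "rat_multiple p (\<lambda>n k. 1)"
    using assms(2) by (intro rat_multipleI[of "\<lambda>n k. 1" p]) (auto intro: poly2_fun_const)
  from rat_multiple_mult[OF assms(1) this] show ?thesis by simp
qed

lemma rat_multiple_diff:
  assumes "rat_multiple T1 S" "rat_multiple T2 S"
  shows "rat_multiple (\<lambda>n k. T1 n k - T2 n k) S"
  using rat_multiple_add[OF assms(1) rat_multiple_times_poly[OF assms(2) poly2_fun_const[of "-1"]]]
  by simp

lemma rat_multiple_sum:
  assumes "finite I" "\<And>j. j \<in> I \<Longrightarrow> rat_multiple (T j) S"
  shows "rat_multiple (\<lambda>n k. \<Sum>j\<in>I. T j n k) S"
  using assms
proof (induction I rule: finite_induct)
  case empty
  show ?case by (rule rat_multipleI[of "\<lambda>n k. 1" "\<lambda>n k. 0"]) (auto intro: poly2_fun_const)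
next
  case (insert x F)
  then have "rat_multiple (\<lambda>n k. T x n k + (\<Sum>j\<in>F. T j n k)) S"
    by (intro rat_multiple_add) auto
  with insert show ?case by simp
qed

lemma rat_multiple_shift:
  assumes "rat_multiple T S"
  shows "rat_multiple (\<lambda>n k. T (n + i) (k + j)) (\<lambda>n k. S (n + i) (k + j))"
proof -
  obtain u v where "poly2_fun u" "poly2_fun v" "\<forall>n k. u n k \<noteq> 0"
    "\<forall>n k. u n k * T n k = v n k * S n k"
    using assms by (rule rat_multipleE)
  then show ?thesis
    by (intro rat_multipleI[of "\<lambda>n k. u (n + i) (k + j)" "\<lambda>n k. v (n + i) (k + j)"])
       (auto intro: poly2_fun_shift)
qed

lemma rat_multiple_Gamma_shift:
  assumes "poly2_fun L" "\<And>n k. L n k \<notin> \<int>\<^sub>\<le>\<^sub>0" "\<And>n k. L n k + of_int m \<notin> \<int>\<^sub>\<le>\<^sub>0"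
  shows "rat_multiple (\<lambda>n k. Gamma (L n k + of_int m)) (\<lambda>n k. Gamma (L n k))"
proof (cases "0 \<le> m")
  case True
  then obtain N where m: "m = int N" by (metis nonneg_eq_int)
  show ?thesis
  proof (rule rat_multipleI[of "\<lambda>n k. 1" "\<lambda>n k. pochhammer (L n k) N"])
    fix n k
    have "pochhammer (L n k) N = Gamma (L n k + of_nat N) / Gamma (L n k)"
      using assms(2) by (rule pochhammer_Gamma)
    then show "1 * Gamma (L n k + of_int m) = pochhammer (L n k) N * Gamma (L n k)"
      using Gamma_nonzero[OF assms(2)] m by simp
  qed (use assms(1) in \<open>auto intro: poly2_fun_const poly2_fun_pochhammer\<close>)
next
  case False
  define N where "N = nat (- m)"
  have m_eq: "L n k + of_int m + of_nat N = L n k" for n k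
    using False by (simp add: N_def)
  show ?thesis
  proof (rule rat_multipleI[of "\<lambda>n k. pochhammer (L n k + of_int m) N" "\<lambda>n k. 1"])
    fix n k
    show "pochhammer (L n k + of_int m) N \<noteq> 0"
      using assms(3)[of n k] by (auto simp: pochhammer_eq_0_iff)
    have "pochhammer (L n k + of_int m) N
        = Gamma (L n k + of_int m + of_nat N) / Gamma (L n k + of_int m)"
      using assms(3) by (rule pochhammer_Gamma)
    then show "pochhammer (L n k + of_int m) N * Gamma (L n k + of_int m) = 1 * Gamma (L n k)"
      using Gamma_nonzero[OF assms(3)] unfolding m_eq by simp
  qed (auto intro: poly2_fun_const
        poly2_fun_pochhammer[OF poly2_fun_add[OF assms(1) poly2_fun_const]])
qed

lemma rat_multiple_rGamma_shift:
  assumes "poly2_fun L" "\<And>n k. L n k \<notin> \<int>\<^sub>\<le>\<^sub>0"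
  shows "rat_multiple (\<lambda>n k. rGamma (L n k + of_int m)) (\<lambda>n k. rGamma (L n k))"
proof (cases "0 \<le> m")
  case True
  then obtain N where m: "m = int N" by (metis nonneg_eq_int)
  show ?thesis
  proof (rule rat_multipleI[of "\<lambda>n k. pochhammer (L n k) N" "\<lambda>n k. 1"])
    fix n k
    show "pochhammer (L n k) N \<noteq> 0"
      using assms(2)[of n k] by (auto simp: pochhammer_eq_0_iff)
    show "pochhammer (L n k) N * rGamma (L n k + of_int m) = 1 * rGamma (L n k)"
      using pochhammer_rGamma[of "L n k" N] m by simp
  qed (use assms(1) in \<open>auto intro: poly2_fun_const poly2_fun_pochhammer\<close>)
next
  case False
  define N where "N = nat (- m)"
  have m_eq: "L n k + of_int m + of_nat N = L n k" for n k
    using False by (simp add: N_def)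
  show ?thesis
  proof (rule rat_multipleI[of "\<lambda>n k. 1" "\<lambda>n k. pochhammer (L n k + of_int m) N"])
    fix n k
    show "1 * rGamma (L n k + of_int m) = pochhammer (L n k + of_int m) N * rGamma (L n k)"
      using pochhammer_rGamma[of "L n k + of_int m" N] m_eq[of n k] by simp
  qed (auto intro: poly2_fun_const
        poly2_fun_pochhammer[OF poly2_fun_add[OF assms(1) poly2_fun_const]])
qed

lemma rat_multiple_neg1_pow_shift:
  "rat_multiple (\<lambda>n k. neg1_pow (L n k + of_int m)) (\<lambda>n k. neg1_pow (L n k))"
  by (rule rat_multipleI[of "\<lambda>n k. 1" "\<lambda>n k. exp (complex_of_real pi * \<i> * of_int m)"])
     (auto intro: poly2_fun_const simp: neg1_pow_add)

lemma poly2_relation_if_rat_multiples: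
  assumes "rat_multiple G S" "rat_multiple G' S" "G n0 k0 \<noteq> 0"
  shows "\<exists>V U. U \<noteq> 0 \<and>
    (\<forall>n k. poly2 U (of_int n) (of_int k) * G' n k = poly2 V (of_int n) (of_int k) * G n k)"
proof -
  obtain u v where uv: "poly2_fun u" "poly2_fun v" "\<forall>n k. u n k \<noteq> 0"
    "\<forall>n k. u n k * G n k = v n k * S n k"
    using assms(1) by (rule rat_multipleE)
  obtain u' v' where uv': "poly2_fun u'" "poly2_fun v'" "\<forall>n k. u' n k \<noteq> 0"
    "\<forall>n k. u' n k * G' n k = v' n k * S n k"
    using assms(2) by (rule rat_multipleE)
  obtain U where U: "\<forall>n k. u' n k * v n k = poly2 U (of_int n) (of_int k)"
    using poly2_fun_imp_poly2[OF poly2_fun_mult[OF uv'(1) uv(2)]] by blast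
  obtain V where V: "\<forall>n k. v' n k * u n k = poly2 V (of_int n) (of_int k)"
    using poly2_fun_imp_poly2[OF poly2_fun_mult[OF uv'(2) uv(1)]] by blast
  have "v n0 k0 \<noteq> 0"
    using uv(3,4) assms(3) by (metis mult_eq_0_iff)
  then have "poly2 U (of_int n0) (of_int k0) \<noteq> 0"
    using U uv'(3) by (metis mult_eq_0_iff)
  then have "U \<noteq> 0"
    by (auto simp: poly2_eq_poly_poly)
  moreover have
    "poly2 U (of_int n) (of_int k) * G' n k = poly2 V (of_int n) (of_int k) * G n k" for n k
  proof -
    have "poly2 U (of_int n) (of_int k) * G' n k = v n k * (u' n k * G' n k)"
      by (simp flip: U add: mult_ac)
    also have "\<dots> = v n k * (v' n k * S n k)"
      using uv'(4) by simp
    also have "\<dots> = v' n k * (u n k * G n k)"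
      using uv(4) by (simp add: mult_ac)
    also have "\<dots> = poly2 V (of_int n) (of_int k) * G n k"
      by (simp flip: V add: mult_ac)
    finally show ?thesis .
  qed
  ultimately show ?thesis by blast
qed

lemma hypergeometric2_if_rat_multiples:
  assumes "rat_multiple G S" "rat_multiple (\<lambda>n k. G (n + 1) k) S"
    and "rat_multiple (\<lambda>n k. G n (k + 1)) S"
  shows "hypergeometric2 G"
proof (cases "\<exists>n k. G n k \<noteq> 0")
  case False
  then show ?thesis
    unfolding hypergeometric2_def
    by (intro exI[of _ 0] exI[of _ 1]) (simp add: poly2_eq_poly_poly)
next
  case True
  then obtain n0 k0 where nonzero: "G n0 k0 \<noteq> 0" by blast
  obtain P1 Q1 P2 Q2 where "Q1 \<noteq> 0"
      "\<forall>n k. poly2 Q1 (of_int n) (of_int k) * G (n + 1) k = poly2 P1 (of_int n) (of_int k) * G n k"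
    and "Q2 \<noteq> 0"
      "\<forall>n k. poly2 Q2 (of_int n) (of_int k) * G n (k + 1) = poly2 P2 (of_int n) (of_int k) * G n k"
    using poly2_relation_if_rat_multiples[OF assms(1) assms(2) nonzero]
      poly2_relation_if_rat_multiples[OF assms(1) assms(3) nonzero] by blast
  then show ?thesis
    unfolding hypergeometric2_def by blast
qed

section \<open>Signed sums and arithmetic progressions\<close>

text \<open>One of the two sums is always empty: for \<open>m < 0\<close> this is minus the sum over
  \<open>m \<le> j < 0\<close>, which makes \<open>signed_sum_differences\<close> hold for every integer \<open>m\<close>.\<close>

definition signed_sum :: "int \<Rightarrow> (int \<Rightarrow> 'a::ab_group_add) \<Rightarrow> 'a" where
  "signed_sum m f = (\<Sum>i<nat m. f (int i)) - (\<Sum>i<nat (- m). f (m + int i))"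

lemma signed_sum_diff: "signed_sum m f - signed_sum m g = signed_sum m (\<lambda>j. f j - g j)"
  by (simp add: signed_sum_def sum_subtractf)

lemma signed_sum_differences: "signed_sum m (\<lambda>j. f (j + 1) - f j) = f m - f 0"
proof -
  have "(\<Sum>i<nat m. f (int i + 1) - f (int i)) = f (int (nat m)) - f 0"
    using sum_lessThan_telescope[of "\<lambda>i. f (int i)" "nat m"] by (simp add: add.commute)
  moreover have
    "(\<Sum>i<nat (- m). f (m + int i + 1) - f (m + int i)) = f (m + int (nat (- m))) - f m"
    using sum_lessThan_telescope[of "\<lambda>i. f (m + int i)" "nat (- m)"] by (simp add: add_ac)
  ultimately show ?thesis
    by (cases "0 \<le> m") (simp_all add: signed_sum_def)
qed

lemma signed_sum_telescope:
  assumes "\<And>j. m \<noteq> 0 \<Longrightarrow> f (j + 1) - f j = g j - h j"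
  shows "f m - f 0 = signed_sum m g - signed_sum m h"
proof (cases "m = 0")
  case True
  then show ?thesis by (simp add: signed_sum_def)
next
  case False
  have "signed_sum m g - signed_sum m h = signed_sum m (\<lambda>j. f (j + 1) - f j)"
    using assms[OF False] by (simp add: signed_sum_diff)
  then show ?thesis
    by (simp add: signed_sum_differences)
qed

lemma rat_multiple_signed_sum:
  assumes "\<And>j. m \<noteq> 0 \<Longrightarrow> rat_multiple (T j) S"
  shows "rat_multiple (\<lambda>n k. signed_sum m (\<lambda>j. T j n k)) S"
  unfolding signed_sum_def using assms by (intro rat_multiple_diff rat_multiple_sum) auto

lemma not_Ints_if_progression_avoids_nonpos_Ints:
  fixes w :: "'a::ring_1"
  assumes "D \<noteq> 0" "\<And>n. of_int (D * n) + w \<notin> \<int>\<^sub>\<le>\<^sub>0"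
  shows "w \<notin> \<int>"
proof
  assume "w \<in> \<int>"
  then obtain z where w: "w = of_int z" by (auto elim: Ints_cases)
  have "0 < D * D"
    using assms(1) by (auto simp: zero_less_mult_iff linorder_neq_iff)
  then have "1 \<le> D * D"
    by linarith
  then have "\<bar>z\<bar> \<le> D * D * \<bar>z\<bar>"
    using mult_right_mono[of 1 "D * D" "\<bar>z\<bar>"] by simp
  then have "D * (- D * \<bar>z\<bar>) + z \<le> 0"
    by (simp add: algebra_simps)
  then have "of_int (D * (- D * \<bar>z\<bar>)) + w \<in> \<int>\<^sub>\<le>\<^sub>0"
    unfolding w of_int_add[symmetric] by (rule nonpos_Ints_of_int)
  with assms(2) show False by blast
qed

lemma progression_shift_avoids_nonpos_Ints:
  fixes w :: "'a::ring_1"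
  assumes "D \<noteq> 0 \<or> m = 0" "\<And>n. of_int (D * n) + w \<notin> \<int>\<^sub>\<le>\<^sub>0"
  shows "of_int (D * n) + w + of_int m \<notin> \<int>\<^sub>\<le>\<^sub>0"
proof (cases "m = 0")
  case True
  with assms(2) show ?thesis by simp
next
  case False
  with assms have "w \<notin> \<int>"
    by (intro not_Ints_if_progression_avoids_nonpos_Ints[of D]) auto
  then have "of_int (D * n) + w + of_int m \<notin> \<int>"
    by (metis Ints_diff Ints_of_int add.commute add_diff_cancel_left')
  then show ?thesis
    using nonpos_Ints_Int by blast
qed

section \<open>The seed along a line\<close>

locale seed_line =
  fixes K A B C :: int and k0 a b c :: complex
  assumes regular: "F_regular K A B C k0 a b c"
begin

abbreviation F :: "int \<Rightarrow> int \<Rightarrow> complex" where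
  "F \<equiv> F_spec K A B C k0 a b c"

definition X :: "int \<Rightarrow> int \<Rightarrow> complex" where "X n k = of_int (K * n) + k0 + of_int k"
definition P :: "int \<Rightarrow> complex" where "P n = of_int (A * n) + a"
definition Q :: "int \<Rightarrow> complex" where "Q n = of_int (B * n) + b"
definition R :: "int \<Rightarrow> complex" where "R n = of_int (C * n) + c"

definition shifted :: "(complex \<Rightarrow> complex \<Rightarrow> complex \<Rightarrow> complex \<Rightarrow> complex)
    \<Rightarrow> int \<Rightarrow> int \<Rightarrow> int \<Rightarrow> int \<Rightarrow> int \<Rightarrow> int \<Rightarrow> complex" where
  "shifted T m i j l n k = T (X n k + of_int m) (P n + of_int i) (Q n + of_int j) (R n + of_int l)"

lemma F_eq_shifted: "F = shifted F0 0 0 0 0"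
  by (simp add: fun_eq_iff F_spec_def shifted_def X_def P_def Q_def R_def)

lemma F_next_eq_shifted: "(\<lambda>n k. F (n + 1) k) = shifted F0 K A B C"
  by (simp add: fun_eq_iff F_spec_def shifted_def X_def P_def Q_def R_def algebra_simps)

lemma shifted_next_k: "shifted T m i j l n (k + 1) = shifted T (m + 1) i j l n k"
  by (simp add: shifted_def X_def add_ac)

lemma poly2_fun_line:
  "poly2_fun X" "poly2_fun (\<lambda>n k. P n)" "poly2_fun (\<lambda>n k. Q n)" "poly2_fun (\<lambda>n k. R n)"
  unfolding X_def[abs_def] P_def Q_def R_def of_int_mult
  by (intro poly2_fun_add poly2_fun_mult poly2_fun_const poly2_fun_n poly2_fun_k)+

lemma base_args_regular:
  "2*P n + X n k \<notin> \<int>\<^sub>\<le>\<^sub>0" "2*Q n + X n k \<notin> \<int>\<^sub>\<le>\<^sub>0"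
  "2*P n + 2*R n + X n k \<notin> \<int>\<^sub>\<le>\<^sub>0" "2*Q n + 2*R n + X n k \<notin> \<int>\<^sub>\<le>\<^sub>0"
  "2*R n \<notin> \<int>\<^sub>\<le>\<^sub>0" "P n - Q n + R n + 1/2 \<notin> \<int>\<^sub>\<le>\<^sub>0" "P n - Q n - R n + 1/2 \<notin> \<int>\<^sub>\<le>\<^sub>0"
  using regular unfolding F_regular_def Let_def X_def P_def Q_def R_def by simp_all

lemma shifted_args_regular:
  shows "2*P n + X n k + of_int d \<notin> \<int>\<^sub>\<le>\<^sub>0"
    and "2*Q n + X n k + of_int d \<notin> \<int>\<^sub>\<le>\<^sub>0"
    and "C \<noteq> 0 \<or> d = 0 \<Longrightarrow> 2*R n + of_int d \<notin> \<int>\<^sub>\<le>\<^sub>0"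
    and "A - B + C \<noteq> 0 \<or> d = 0 \<Longrightarrow> P n - Q n + R n + 1/2 + of_int d \<notin> \<int>\<^sub>\<le>\<^sub>0"
proof -
  show "2*P n + X n k + of_int d \<notin> \<int>\<^sub>\<le>\<^sub>0" "2*Q n + X n k + of_int d \<notin> \<int>\<^sub>\<le>\<^sub>0"
    using base_args_regular(1,2)[of n "k + d"] by (simp_all add: X_def add_ac)
  have R_progression: "2*R n = of_int (2*C * n) + 2*c" for n
    by (simp add: R_def algebra_simps)
  show "2*R n + of_int d \<notin> \<int>\<^sub>\<le>\<^sub>0" if "C \<noteq> 0 \<or> d = 0"
    using progression_shift_avoids_nonpos_Ints[of "2*C" d] base_args_regular(5) that
    unfolding R_progression by auto
  have PQR_progression: "P n - Q n + R n + 1/2 = of_int ((A - B + C) * n) + (a - b + c + 1/2)" for n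
    by (simp add: P_def Q_def R_def algebra_simps)
  show "P n - Q n + R n + 1/2 + of_int d \<notin> \<int>\<^sub>\<le>\<^sub>0" if "A - B + C \<noteq> 0 \<or> d = 0"
    using progression_shift_avoids_nonpos_Ints[OF that] base_args_regular(6)
    unfolding PQR_progression by blast
qed

lemma rat_multiple_seed_term:
  assumes "C \<noteq> 0 \<or> l = 0" "A - B + C \<noteq> 0 \<or> i - j + l + r = 0"
  shows "rat_multiple (shifted (seed_term p q r s) m i j l) F"
proof -
  have "rat_multiple
      (\<lambda>n k. neg1_pow (X n k + of_int m)
        * Gamma (2*P n + X n k + of_int (2*i + m)) * Gamma (2*Q n + X n k + of_int (2*j + m))
        * rGamma (2*P n + 2*R n + X n k + of_int (2*i + 2*l + m + p))
        * rGamma (2*Q n + 2*R n + X n k + of_int (2*j + 2*l + m + q))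
        * Gamma (2*R n + of_int (2*l)) * Gamma (P n - Q n + R n + 1/2 + of_int (i - j + l + r))
        * rGamma (P n - Q n - R n + 1/2 + of_int (i - j - l + s)))
      (\<lambda>n k. neg1_pow (X n k) * Gamma (2*P n + X n k) * Gamma (2*Q n + X n k)
        * rGamma (2*P n + 2*R n + X n k) * rGamma (2*Q n + 2*R n + X n k)
        * Gamma (2*R n) * Gamma (P n - Q n + R n + 1/2) * rGamma (P n - Q n - R n + 1/2))"
    (is "rat_multiple ?T ?S")
    using assms
    by (intro rat_multiple_mult rat_multiple_neg1_pow_shift rat_multiple_Gamma_shift
        rat_multiple_rGamma_shift shifted_args_regular base_args_regular
        poly2_fun_add poly2_fun_diff poly2_fun_mult poly2_fun_const poly2_fun_line) auto
  moreover have "?T = shifted (seed_term p q r s) m i j l"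
    by (simp add: fun_eq_iff shifted_def seed_term_def algebra_simps)
  moreover have "?S = F"
    by (simp add: fun_eq_iff F_eq_shifted F0_eq_seed_term shifted_def seed_term_def)
  ultimately show ?thesis by simp
qed

lemma rat_multiple_shifted_F0:
  assumes "C \<noteq> 0 \<or> l = 0" "A - B + C \<noteq> 0 \<or> i - j + l = 0"
  shows "rat_multiple (shifted F0 m i j l) F"
  using rat_multiple_seed_term[where p = 0 and q = 0 and r = 0 and s = 0] assms
  by (simp add: F0_eq_seed_term)

lemma rat_multiple_shifted_mate_a:
  assumes "C \<noteq> 0 \<or> l = 0" "A - B + C \<noteq> 0 \<or> i - j + l = 0"
  shows "rat_multiple (shifted mate_a m i j l) F"
  unfolding shifted_def mate_a_def using assms
  by (intro rat_multiple_times_poly rat_multiple_seed_term[unfolded shifted_def]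
      poly2_fun_add poly2_fun_diff poly2_fun_mult poly2_fun_const poly2_fun_line) auto

lemma rat_multiple_shifted_mate_b:
  assumes "C \<noteq> 0 \<or> l = 0" "A - B + C \<noteq> 0 \<or> i - j + l = 1"
  shows "rat_multiple (shifted mate_b m i j l) F"
  unfolding shifted_def mate_b_def using assms
  by (intro rat_multiple_times_poly rat_multiple_seed_term[unfolded shifted_def]
      poly2_fun_add poly2_fun_diff poly2_fun_mult poly2_fun_const poly2_fun_line) auto

lemma rat_multiple_shifted_mate_c:
  assumes "C \<noteq> 0 \<or> l = 0" "A - B + C \<noteq> 0 \<or> i - j + l = 0"
  shows "rat_multiple (shifted mate_c m i j l) F"
  unfolding shifted_def mate_c_def using assms
  by (intro rat_multiple_times_poly rat_multiple_seed_term[unfolded shifted_def]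
      poly2_fun_divide poly2_fun_add poly2_fun_diff poly2_fun_mult poly2_fun_const
      poly2_fun_line) auto

lemma shifted_contiguous_a:
  assumes "A - B + C \<noteq> 0 \<or> i - j + l = 0"
  shows "shifted F0 m (i + 1) j l n k - shifted F0 m i j l n k
    = shifted mate_a (m + 1) i j l n k - shifted mate_a m i j l n k"
proof -
  have "2*(P n + of_int i) + (X n k + of_int m) \<notin> \<int>\<^sub>\<le>\<^sub>0"
    using shifted_args_regular(1)[of n k "2*i + m"] by (simp add: algebra_simps)
  moreover have "2*(Q n + of_int j) + (X n k + of_int m) \<notin> \<int>\<^sub>\<le>\<^sub>0"
    using shifted_args_regular(2)[of n k "2*j + m"] by (simp add: algebra_simps)
  moreover have "P n + of_int i - (Q n + of_int j) + (R n + of_int l) + 1/2 \<notin> \<int>\<^sub>\<le>\<^sub>0"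
    using shifted_args_regular(4)[of "i - j + l" n] assms by (simp add: algebra_simps)
  ultimately have "F0 (X n k + of_int m) (P n + of_int i + 1) (Q n + of_int j) (R n + of_int l)
      - F0 (X n k + of_int m) (P n + of_int i) (Q n + of_int j) (R n + of_int l)
    = mate_a (X n k + of_int m + 1) (P n + of_int i) (Q n + of_int j) (R n + of_int l)
      - mate_a (X n k + of_int m) (P n + of_int i) (Q n + of_int j) (R n + of_int l)"
    by (rule F0_contiguous_a)
  then show ?thesis
    by (simp add: shifted_def add.assoc)
qed

lemma shifted_contiguous_b:
  assumes "A - B + C \<noteq> 0 \<or> i - j + l = 1"
  shows "shifted F0 m i (j + 1) l n k - shifted F0 m i j l n k
    = shifted mate_b (m + 1) i j l n k - shifted mate_b m i j l n k"
proof -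
  have "2*(P n + of_int i) + (X n k + of_int m) \<notin> \<int>\<^sub>\<le>\<^sub>0"
    using shifted_args_regular(1)[of n k "2*i + m"] by (simp add: algebra_simps)
  moreover have "2*(Q n + of_int j) + (X n k + of_int m) \<notin> \<int>\<^sub>\<le>\<^sub>0"
    using shifted_args_regular(2)[of n k "2*j + m"] by (simp add: algebra_simps)
  moreover have "P n + of_int i - (Q n + of_int j) + (R n + of_int l) - 1/2 \<notin> \<int>\<^sub>\<le>\<^sub>0"
    using shifted_args_regular(4)[of "i - j + l - 1" n] assms by (simp add: algebra_simps)
  ultimately have "F0 (X n k + of_int m) (P n + of_int i) (Q n + of_int j + 1) (R n + of_int l)
      - F0 (X n k + of_int m) (P n + of_int i) (Q n + of_int j) (R n + of_int l)
    = mate_b (X n k + of_int m + 1) (P n + of_int i) (Q n + of_int j) (R n + of_int l)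
      - mate_b (X n k + of_int m) (P n + of_int i) (Q n + of_int j) (R n + of_int l)"
    by (rule F0_contiguous_b)
  then show ?thesis
    by (simp add: shifted_def add.assoc)
qed

lemma shifted_contiguous_c:
  assumes "C \<noteq> 0" "A - B + C \<noteq> 0 \<or> i - j + l = 0"
  shows "shifted F0 m i j (l + 1) n k - shifted F0 m i j l n k
    = shifted mate_c (m + 1) i j l n k - shifted mate_c m i j l n k"
proof -
  have "2*(P n + of_int i) + (X n k + of_int m) \<notin> \<int>\<^sub>\<le>\<^sub>0"
    using shifted_args_regular(1)[of n k "2*i + m"] by (simp add: algebra_simps)
  moreover have "2*(Q n + of_int j) + (X n k + of_int m) \<notin> \<int>\<^sub>\<le>\<^sub>0"
    using shifted_args_regular(2)[of n k "2*j + m"] by (simp add: algebra_simps)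
  moreover have "2*(R n + of_int l) \<notin> \<int>\<^sub>\<le>\<^sub>0"
    using shifted_args_regular(3)[of "2*l" n] assms(1) by (simp add: algebra_simps)
  moreover have "P n + of_int i - (Q n + of_int j) + (R n + of_int l) + 1/2 \<notin> \<int>\<^sub>\<le>\<^sub>0"
    using shifted_args_regular(4)[of "i - j + l" n] assms(2) by (simp add: algebra_simps)
  ultimately have "F0 (X n k + of_int m) (P n + of_int i) (Q n + of_int j) (R n + of_int l + 1)
      - F0 (X n k + of_int m) (P n + of_int i) (Q n + of_int j) (R n + of_int l)
    = mate_c (X n k + of_int m + 1) (P n + of_int i) (Q n + of_int j) (R n + of_int l)
      - mate_c (X n k + of_int m) (P n + of_int i) (Q n + of_int j) (R n + of_int l)"
    by (rule F0_contiguous_c)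
  then show ?thesis
    by (simp add: shifted_def add.assoc)
qed

definition G_ab :: "int \<Rightarrow> int \<Rightarrow> complex" where
  "G_ab n k = signed_sum A (\<lambda>j. shifted mate_a 0 j j 0 n k + shifted mate_b 0 (j + 1) j 0 n k)"

definition G_bc :: "int \<Rightarrow> int \<Rightarrow> complex" where
  "G_bc n k =
    signed_sum C (\<lambda>j. shifted mate_c 0 A (A + j) j n k + shifted mate_b 0 A (A + j) (j + 1) n k)"

definition G_b :: "int \<Rightarrow> int \<Rightarrow> complex" where
  "G_b n k = signed_sum (B - A - C) (\<lambda>j. shifted mate_b 0 A (A + C + j) C n k)"

definition G_x :: "int \<Rightarrow> int \<Rightarrow> complex" where
  "G_x n k = signed_sum K (\<lambda>j. shifted F0 j A B C n k)"

definition G :: "int \<Rightarrow> int \<Rightarrow> complex" where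
  "G n k = G_ab n k + G_bc n k + G_b n k + G_x n k"

lemma G_ab_telescopes:
  "shifted F0 0 A A 0 n k - shifted F0 0 0 0 0 n k = G_ab n (k + 1) - G_ab n k"
  unfolding G_ab_def shifted_next_k
proof (rule signed_sum_telescope[where f = "\<lambda>j. shifted F0 0 j j 0 n k"])
  fix j
  show "shifted F0 0 (j + 1) (j + 1) 0 n k - shifted F0 0 j j 0 n k
    = (shifted mate_a (0 + 1) j j 0 n k + shifted mate_b (0 + 1) (j + 1) j 0 n k)
      - (shifted mate_a 0 j j 0 n k + shifted mate_b 0 (j + 1) j 0 n k)"
    using shifted_contiguous_a[of j j 0 0 n k] shifted_contiguous_b[of "j + 1" j 0 0 n k]
    by (simp add: algebra_simps)
qed

lemma G_bc_telescopes:
  "shifted F0 0 A (A + C) C n k - shifted F0 0 A A 0 n k = G_bc n (k + 1) - G_bc n k"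
proof -
  have "shifted F0 0 A (A + C) C n k - shifted F0 0 A (A + 0) 0 n k = G_bc n (k + 1) - G_bc n k"
    unfolding G_bc_def shifted_next_k
  proof (rule signed_sum_telescope[where f = "\<lambda>j. shifted F0 0 A (A + j) j n k"])
    fix j
    assume "C \<noteq> 0"
    then show "shifted F0 0 A (A + (j + 1)) (j + 1) n k - shifted F0 0 A (A + j) j n k
      = (shifted mate_c (0 + 1) A (A + j) j n k + shifted mate_b (0 + 1) A (A + j) (j + 1) n k)
        - (shifted mate_c 0 A (A + j) j n k + shifted mate_b 0 A (A + j) (j + 1) n k)"
      using shifted_contiguous_c[of A "A + j" j 0 n k]
        shifted_contiguous_b[of A "A + j" "j + 1" 0 n k]
      by (simp add: algebra_simps)
  qed
  then show ?thesis by simp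
qed

lemma G_b_telescopes:
  "shifted F0 0 A B C n k - shifted F0 0 A (A + C) C n k = G_b n (k + 1) - G_b n k"
proof -
  have "shifted F0 0 A (A + C + (B - A - C)) C n k - shifted F0 0 A (A + C + 0) C n k
      = G_b n (k + 1) - G_b n k"
    unfolding G_b_def shifted_next_k
  proof (rule signed_sum_telescope[where f = "\<lambda>j. shifted F0 0 A (A + C + j) C n k"])
    fix j
    assume "B - A - C \<noteq> 0"
    then show "shifted F0 0 A (A + C + (j + 1)) C n k - shifted F0 0 A (A + C + j) C n k
      = shifted mate_b (0 + 1) A (A + C + j) C n k - shifted mate_b 0 A (A + C + j) C n k"
      using shifted_contiguous_b[of A "A + C + j" C 0 n k] by (simp add: algebra_simps)
  qed
  then show ?thesis by simp
qed

lemma G_x_telescopes: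
  "shifted F0 K A B C n k - shifted F0 0 A B C n k = G_x n (k + 1) - G_x n k"
  unfolding G_x_def shifted_next_k
  by (rule signed_sum_telescope[where f = "\<lambda>j. shifted F0 j A B C n k"]) simp

lemma F_next_k_eq_shifted: "(\<lambda>n k. F n (k + 1)) = shifted F0 1 0 0 0"
  by (simp add: fun_eq_iff F_eq_shifted shifted_next_k)

lemma F_diff_n_eq_G_diff_k: "F (n + 1) k - F n k = G n (k + 1) - G n k"
proof -
  have "F (n + 1) k - F n k = shifted F0 K A B C n k - shifted F0 0 0 0 0 n k"
    using fun_cong[OF fun_cong[OF F_next_eq_shifted]] fun_cong[OF fun_cong[OF F_eq_shifted]]
    by simp
  also have "\<dots> = (shifted F0 K A B C n k - shifted F0 0 A B C n k)
      + (shifted F0 0 A B C n k - shifted F0 0 A (A + C) C n k)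
      + (shifted F0 0 A (A + C) C n k - shifted F0 0 A A 0 n k)
      + (shifted F0 0 A A 0 n k - shifted F0 0 0 0 0 n k)"
    by simp
  also have "\<dots> = G n (k + 1) - G n k"
    unfolding G_x_telescopes G_b_telescopes G_bc_telescopes G_ab_telescopes G_def
    by simp
  finally show ?thesis .
qed

lemma rat_multiple_G: "rat_multiple G F"
  unfolding G_def[abs_def] G_ab_def G_bc_def G_b_def G_x_def
  by (intro rat_multiple_add rat_multiple_signed_sum rat_multiple_shifted_F0
      rat_multiple_shifted_mate_a rat_multiple_shifted_mate_b rat_multiple_shifted_mate_c) auto

lemma hypergeometric_G: "hypergeometric2 G"
proof (rule hypergeometric2_if_rat_multiples[OF rat_multiple_G])
  have "rat_multiple (\<lambda>n k. F (n + 1) k) F"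
    unfolding F_next_eq_shifted by (rule rat_multiple_shifted_F0) auto
  then show "rat_multiple (\<lambda>n k. G (n + 1) k) F"
    using rat_multiple_shift[OF rat_multiple_G, of 1 0] by (auto intro: rat_multiple_trans)
  have "rat_multiple (\<lambda>n k. F n (k + 1)) F"
    unfolding F_next_k_eq_shifted by (rule rat_multiple_shifted_F0) auto
  then show "rat_multiple (\<lambda>n k. G n (k + 1)) F"
    using rat_multiple_shift[OF rat_multiple_G, of 0 1] by (auto intro: rat_multiple_trans)
qed

lemma WZ_mate_G: "WZ_mate F G"
  unfolding WZ_mate_def using hypergeometric_G F_diff_n_eq_G_diff_k by blast

end

theorem theorem1:
  fixes K A B C :: int and k0 a b c :: complex
  assumes "F_regular K A B C k0 a b c"
  shows "\<exists>G. WZ_mate (F_spec K A B C k0 a b c) G"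
proof -
  interpret seed_line K A B C k0 a b c
    using assms by (rule seed_line.intro)
  show ?thesis
    using WZ_mate_G by blast
qed

end
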